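(* Let $0<\varpi<2$, $0\le\beta_s\le1$ and $\epsilon>0$. Let $X$ be binary with distribution $(p,1-p)$, $p\in[0,1/2]$, and $Y$ the output of the binary symmetric channel $p(y\mid x)=\begin{pmatrix}1-\beta_s&\beta_s\\ \beta_s&1-\beta_s\end{pmatrix}$. Consider $$\max_{p\in[0,1/2]} I(X;Y)\quad\text{subject to}\quad L(\varpi,X)-L(\varpi,X\mid Y)\le\epsilon.$$ Let $C_{\beta_s}=e^{\varpi/2}-\big(\beta_s e^{\varpi(1-\beta_s)}+(1-\beta_s)e^{\varpi\beta_s}\big)$. Then the optimal value equals $1-H(\beta_s)$ if $\epsilon\ge C_{\beta_s}$, and equals $H\big(p_s(1-\beta_s)+(1-p_s)\beta_s\big)-H(\beta_s)$ if $0<\epsilon\le C_{\beta_s}$, where $p_s\in[0,1/2]$ is the solution of $L(\varpi,X)-L(\varpi,X\mid Y)=\epsilon$ (viewed as an equation in $p$).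
   Context: MIM: $L(\varpi,X)=\sum_i p(x_i)e^{\varpi(1-p(x_i))}$. CMIM: $L(\varpi,X\mid Y)=\sum_{j:\,p(y_j)>0}p(y_j)\sum_i p(x_i\mid y_j)e^{\varpi(1-p(x_i\mid y_j))}$, where the joint law is $p(x_i)p(y_j\mid x_i)$ and $p(x_i\mid y_j)=p(x_i)p(y_j\mid x_i)/p(y_j)$. $I(X;Y)=\sum_{i,j}p(x_i)p(y_j\mid x_i)\log_2\frac{p(y_j\mid x_i)}{p(y_j)}$ is the mutual information in bits, and $H(q)=-q\log_2 q-(1-q)\log_2(1-q)$ is the binary entropy function. *)

theory Defs
  imports Complex_Main
begin

text \<open>Finite discrete setting: input alphabet A, output alphabet B, input law px,
  channel W i j = p(y_j | x_i).\<close>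

definition out_prob :: "'a set \<Rightarrow> ('a \<Rightarrow> real) \<Rightarrow> ('a \<Rightarrow> 'b \<Rightarrow> real) \<Rightarrow> 'b \<Rightarrow> real" where
  "out_prob A px W j = (\<Sum>i\<in>A. px i * W i j)"

definition MIM :: "real \<Rightarrow> 'a set \<Rightarrow> ('a \<Rightarrow> real) \<Rightarrow> real" where
  "MIM w A px = (\<Sum>i\<in>A. px i * exp (w * (1 - px i)))"

definition CMIM :: "real \<Rightarrow> 'a set \<Rightarrow> 'b set \<Rightarrow> ('a \<Rightarrow> real) \<Rightarrow> ('a \<Rightarrow> 'b \<Rightarrow> real) \<Rightarrow> real" where
  "CMIM w A B px W =
     (\<Sum>j\<in>{j\<in>B. out_prob A px W j > 0}.
        out_prob A px W j *
        (\<Sum>i\<in>A. (px i * W i j / out_prob A px W j) *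
                  exp (w * (1 - px i * W i j / out_prob A px W j))))"

definition mutual_info :: "'a set \<Rightarrow> 'b set \<Rightarrow> ('a \<Rightarrow> real) \<Rightarrow> ('a \<Rightarrow> 'b \<Rightarrow> real) \<Rightarrow> real" where
  "mutual_info A B px W =
     (\<Sum>i\<in>A. \<Sum>j\<in>B. px i * W i j * log 2 (W i j / out_prob A px W j))"

definition bin_entropy :: "real \<Rightarrow> real" where
  "bin_entropy q = - q * log 2 q - (1 - q) * log 2 (1 - q)"

text \<open>Binary input with law (p, 1-p): True is x_1, False is x_2.\<close>
definition bin_input :: "real \<Rightarrow> bool \<Rightarrow> real" where
  "bin_input p x = (if x then p else 1 - p)"

definition bsc :: "real \<Rightarrow> bool \<Rightarrow> bool \<Rightarrow> real" where
  "bsc b x y = (if x = y then 1 - b else b)"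

text \<open>Privacy leakage L(w,X) - L(w,X|Y) for the binary input p through BSC(b).\<close>
definition leak :: "real \<Rightarrow> real \<Rightarrow> real \<Rightarrow> real" where
  "leak w b p = MIM w UNIV (bin_input p) - CMIM w UNIV UNIV (bin_input p) (bsc b)"

definition bsc_MI :: "real \<Rightarrow> real \<Rightarrow> real" where
  "bsc_MI b p = mutual_info UNIV UNIV (bin_input p) (bsc b)"

definition is_opt_value :: "real \<Rightarrow> real \<Rightarrow> real \<Rightarrow> real \<Rightarrow> bool" where
  "is_opt_value w b eps v \<longleftrightarrow>
     (\<exists>p\<in>{0..1/2}. leak w b p \<le> eps \<and> bsc_MI b p = v) \<and>
     (\<forall>p\<in>{0..1/2}. leak w b p \<le> eps \<longrightarrow> bsc_MI b p \<le> v)"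

end

theory Submission
  imports Defs
begin

text \<open>Put W = w/2, d = 1 - 2b and m = 1 - 2p. A two-point law with bias x, i.e. ((1-x)/2, (1+x)/2),
  has L(w, .) = e^W F(x) with F(x) = ((1-x) e^(Wx) + (1+x) e^(-Wx))/2, and the two posteriors of X given Y
  have biases tanh(artanh m \<mp> artanh d), with output probabilities (1 \<mp> d m)/2. So the leakage
  is e^W \<Lambda>(m), where \<Lambda>(m) = F(m) - (1 - d m)/2 F(m \<ominus> d) - (1 + d m)/2 F(m \<oplus> d) and
  m \<oplus> d = tanh(artanh m + artanh d).
  For 0 < W < 1 and d \<noteq> 0, \<Lambda> is strictly decreasing on [0, 1]: its derivative compares a
  "slope gap" at m \<ominus> d and at m, and the slope gap is increasing because (1 - x^2)^2 F''(x) is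
  decreasing in |x|, an elementary consequence of tanh u \<le> u. Hence the leakage increases strictly
  and continuously from 0 at p = 0 to C at p = 1/2, while the mutual information H(b + p(1 - 2b)) - H(b)
  is nondecreasing in p. The optimum is therefore attained at the largest feasible p: at p = 1/2 if
  \<epsilon> \<ge> C, and at the unique root p_s of the leakage equation otherwise.\<close>

section \<open>The MIM of a two-point law as a function of its bias\<close>

text \<open>e^W bias_mim W x is the MIM, with exponent 2W, of the law ((1-x)/2, (1+x)/2);
  see bias_mim_two_point.\<close>
definition bias_mim :: "real \<Rightarrow> real \<Rightarrow> real" where
  "bias_mim W x = ((1 - x) * exp (W * x) + (1 + x) * exp (- (W * x))) / 2"

definition bias_mim' :: "real \<Rightarrow> real \<Rightarrow> real" where
  "bias_mim' W x = ((W * (1 - x) - 1) * exp (W * x) + (1 - W * (1 + x)) * exp (- (W * x))) / 2"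

definition bias_mim_curv :: "real \<Rightarrow> real \<Rightarrow> real" where
  "bias_mim_curv W x = (2 - W * (1 - x)) * exp (W * x) + (2 - W * (1 + x)) * exp (- (W * x))"

definition bias_mim_curv' :: "real \<Rightarrow> real \<Rightarrow> real" where
  "bias_mim_curv' W x = W * ((3 - W + W * x) * exp (W * x) - (3 - W - W * x) * exp (- (W * x)))"

lemma has_real_derivative_bias_mim: "(bias_mim W has_real_derivative bias_mim' W x) (at x)"
  unfolding bias_mim_def bias_mim'_def
  by (rule derivative_eq_intros refl | simp)+ (simp add: field_simps)

lemma has_real_derivative_bias_mim':
  "(bias_mim' W has_real_derivative - (W / 2) * bias_mim_curv W x) (at x)"
  unfolding bias_mim_curv_def bias_mim'_def
  by (rule derivative_eq_intros refl | simp)+ (simp add: field_simps)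

lemma has_real_derivative_bias_mim_curv:
  "(bias_mim_curv W has_real_derivative bias_mim_curv' W x) (at x)"
  unfolding bias_mim_curv_def bias_mim_curv'_def
  by (rule derivative_eq_intros refl | simp)+ (simp add: field_simps)

lemma continuous_on_bias_mim: "continuous_on S (bias_mim W)"
  by (meson DERIV_isCont continuous_at_imp_continuous_on has_real_derivative_bias_mim)

lemma bias_mim_minus: "bias_mim W (- x) = bias_mim W x"
  unfolding bias_mim_def by (simp add: field_simps)

lemma bias_mim'_minus: "bias_mim' W (- x) = - bias_mim' W x"
  unfolding bias_mim'_def by (simp add: field_simps)

lemma bias_mim_curv_minus: "bias_mim_curv W (- x) = bias_mim_curv W x"
  unfolding bias_mim_curv_def by (simp add: field_simps)

lemma bias_mim_strict_antimono:
  assumes W: "0 < W" "W \<le> 1" and xy: "0 \<le> x" "x < y"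
  shows "bias_mim W y < bias_mim W x"
proof (rule DERIV_neg_imp_decreasing_open[OF xy(2)])
  fix z assume "x < z" "z < y"
  then have z: "0 < z" using xy by simp
  have eq: "bias_mim' W z
      = ((W - 1) * (exp (W * z) - exp (- (W * z))) - W * z * (exp (W * z) + exp (- (W * z)))) / 2"
    unfolding bias_mim'_def by (simp add: algebra_simps)
  have "exp (- (W * z)) \<le> exp (W * z)" using W z by simp
  then have "(W - 1) * (exp (W * z) - exp (- (W * z))) \<le> 0" using W by (intro mult_nonpos_nonneg) auto
  moreover have "0 < W * z * (exp (W * z) + exp (- (W * z)))" using W z by (intro mult_pos_pos add_pos_pos) auto
  ultimately have "bias_mim' W z < 0" unfolding eq by simp
  then show "\<exists>e. (bias_mim W has_real_derivative e) (at z) \<and> e < 0"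
    using has_real_derivative_bias_mim by blast
qed (rule continuous_on_bias_mim)

text \<open>The inequality tanh u \<le> u for u \<ge> 0, cleared of denominators.\<close>
lemma exp_diff_le_mult_exp_sum:
  fixes u :: real
  assumes "0 \<le> u"
  shows "exp u - exp (- u) \<le> u * (exp u + exp (- u))"
proof -
  define h where "h u = u * (exp u + exp (- u)) - (exp u - exp (- u))" for u :: real
  have "h 0 \<le> h u"
  proof (rule DERIV_nonneg_imp_nondecreasing[OF assms])
    fix x :: real assume "0 \<le> x"
    have "(h has_real_derivative x * (exp x - exp (- x))) (at x)"
      unfolding h_def by (rule derivative_eq_intros refl | simp add: field_simps)+
    moreover have "0 \<le> x * (exp x - exp (- x))" using \<open>0 \<le> x\<close> by simp
    ultimately show "\<exists>y. (h has_real_derivative y) (at x) \<and> 0 \<le> y" by blast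
  qed
  then show ?thesis unfolding h_def by simp
qed

definition weighted_curv :: "real \<Rightarrow> real \<Rightarrow> real" where
  "weighted_curv W x = (1 - x\<^sup>2)\<^sup>2 * bias_mim_curv W x"

lemma weighted_curv_minus: "weighted_curv W (- x) = weighted_curv W x"
  unfolding weighted_curv_def by (simp add: bias_mim_curv_minus)

lemma has_real_derivative_weighted_curv:
  "(weighted_curv W has_real_derivative
     - 4 * x * (1 - x\<^sup>2) * bias_mim_curv W x + (1 - x\<^sup>2)\<^sup>2 * bias_mim_curv' W x) (at x)"
  unfolding weighted_curv_def
  by (rule derivative_eq_intros has_real_derivative_bias_mim_curv refl
      | simp add: field_simps power2_eq_square)+

lemma bias_mim_curv_lower:
  assumes "0 \<le> W" "0 \<le> x"
  shows "(2 - W) * (exp (W * x) + exp (- (W * x))) \<le> bias_mim_curv W x"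
proof -
  have "bias_mim_curv W x
      = (2 - W) * (exp (W * x) + exp (- (W * x))) + W * x * (exp (W * x) - exp (- (W * x)))"
    unfolding bias_mim_curv_def by (simp add: algebra_simps)
  moreover have "0 \<le> W * x * (exp (W * x) - exp (- (W * x)))" using assms by simp
  ultimately show ?thesis by simp
qed

lemma bias_mim_curv'_bounds:
  assumes "0 \<le> W" "W \<le> 3" "0 \<le> x"
  shows "0 \<le> bias_mim_curv' W x"
    and "bias_mim_curv' W x \<le> W\<^sup>2 * x * (4 - W) * (exp (W * x) + exp (- (W * x)))"
proof -
  define E where "E = exp (W * x)"
  define E' where "E' = exp (- (W * x))"
  have eq: "bias_mim_curv' W x = W * ((3 - W) * (E - E') + W * x * (E + E'))"
    unfolding bias_mim_curv'_def E_def E'_def by (simp add: algebra_simps)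
  have "E' \<le> E" "0 < E'" unfolding E_def E'_def using assms by auto
  then show "0 \<le> bias_mim_curv' W x"
    unfolding eq using assms by (intro mult_nonneg_nonneg add_nonneg_nonneg) auto
  have "(3 - W) * (E - E') \<le> (3 - W) * (W * x * (E + E'))"
    unfolding E_def E'_def using exp_diff_le_mult_exp_sum[of "W * x"] assms
    by (intro mult_left_mono) auto
  then have "W * ((3 - W) * (E - E') + W * x * (E + E'))
      \<le> W * ((3 - W) * (W * x * (E + E')) + W * x * (E + E'))"
    using assms by (intro mult_left_mono) auto
  then show "bias_mim_curv' W x \<le> W\<^sup>2 * x * (4 - W) * (exp (W * x) + exp (- (W * x)))"
    unfolding eq E_def[symmetric] E'_def[symmetric] by (simp add: algebra_simps power2_eq_square)
qed

lemma weighted_curv_deriv_neg: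
  assumes W: "0 < W" "W < 1" and x: "0 < x" "x < 1"
  shows "- 4 * x * (1 - x\<^sup>2) * bias_mim_curv W x + (1 - x\<^sup>2)\<^sup>2 * bias_mim_curv' W x < 0"
proof -
  define S where "S = exp (W * x) + exp (- (W * x))"
  have "0 < S" unfolding S_def by (intro add_pos_pos) auto
  have s: "0 < 1 - x\<^sup>2" "1 - x\<^sup>2 \<le> 1"
    using x mult_strict_mono[of x 1 x 1] by (auto simp: power2_eq_square)
  have "W\<^sup>2 * (4 - W) < 4 * (2 - W)"
  proof -
    have "W * W < 1" using W mult_strict_mono[of W 1 W 1] by auto
    moreover have "W\<^sup>2 * (4 - W) = 4 * (W * W) - W * (W * W)" by (simp add: power2_eq_square algebra_simps)
    ultimately show ?thesis using W by (smt (verit) mult_pos_pos)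
  qed
  note curv' = bias_mim_curv'_bounds[of W x, folded S_def]
  have "(1 - x\<^sup>2) * bias_mim_curv' W x \<le> bias_mim_curv' W x"
    using s curv' W x by (simp add: mult_left_le_one_le)
  also have "\<dots> \<le> W\<^sup>2 * x * (4 - W) * S" using curv' W x by simp
  also have "\<dots> < 4 * x * ((2 - W) * S)"
    using mult_strict_right_mono[OF \<open>W\<^sup>2 * (4 - W) < 4 * (2 - W)\<close>, of "x * S"] \<open>0 < S\<close> x
    by (simp add: algebra_simps)
  also have "\<dots> \<le> 4 * x * bias_mim_curv W x"
    using bias_mim_curv_lower[of W x, folded S_def] W x by simp
  finally have "(1 - x\<^sup>2) * ((1 - x\<^sup>2) * bias_mim_curv' W x) < (1 - x\<^sup>2) * (4 * x * bias_mim_curv W x)"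
    using s by (intro mult_strict_left_mono) auto
  then show ?thesis by (simp add: algebra_simps power2_eq_square)
qed

lemma weighted_curv_strict_antimono:
  assumes W: "0 < W" "W < 1" and xy: "0 \<le> x" "x < y" "y \<le> 1"
  shows "weighted_curv W y < weighted_curv W x"
proof (rule DERIV_neg_imp_decreasing_open[OF xy(2)])
  fix z assume "x < z" "z < y"
  then show "\<exists>e. (weighted_curv W has_real_derivative e) (at z) \<and> e < 0"
    using has_real_derivative_weighted_curv weighted_curv_deriv_neg[OF W] xy by force
next
  show "continuous_on {x..y} (weighted_curv W)"
    by (meson DERIV_isCont continuous_at_imp_continuous_on has_real_derivative_weighted_curv)
qed

section \<open>Hyperbolic addition of biases\<close>

text \<open>tanh (artanh d + artanh s): the bias of a posterior law, see leak_eq_leak_kernel.\<close>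
definition tanh_add :: "real \<Rightarrow> real \<Rightarrow> real" where
  "tanh_add d s = (s + d) / (1 + d * s)"

lemma one_plus_mult_pos:
  fixes d m :: real
  assumes "\<bar>d\<bar> < 1" "-1 \<le> m" "m \<le> 1"
  shows "0 < 1 + d * m"
proof -
  have "\<bar>d\<bar> * \<bar>m\<bar> \<le> \<bar>d\<bar>" using assms(2,3) by (simp add: mult_left_le)
  then have "\<bar>d * m\<bar> < 1" using assms(1) by (simp add: abs_mult)
  then show ?thesis by auto
qed

lemma tanh_add_minus: "tanh_add (- d) (- s) = - tanh_add d s"
  unfolding tanh_add_def minus_divide_left by (simp add: algebra_simps)

lemma tanh_add_inverse:
  assumes "1 - d * m \<noteq> 0" "d * d \<noteq> 1"
  shows "tanh_add d (tanh_add (- d) m) = m"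
proof -
  have "tanh_add (- d) m + d = m * (1 - d * d) / (1 - d * m)"
    and "1 + d * tanh_add (- d) m = (1 - d * d) / (1 - d * m)"
    unfolding tanh_add_def using assms by (simp_all add: field_simps)
  then show ?thesis unfolding tanh_add_def[of d] using assms by simp
qed

lemma has_real_derivative_tanh_add:
  "1 + d * s \<noteq> 0 \<Longrightarrow> (tanh_add d has_real_derivative (1 - d\<^sup>2) / (1 + d * s)\<^sup>2) (at s)"
  unfolding tanh_add_def
  by (rule derivative_eq_intros refl | simp add: field_simps power2_eq_square)+

lemma one_minus_mult_tanh_add:
  "1 + d * s \<noteq> 0 \<Longrightarrow> 1 - d * tanh_add d s = (1 - d\<^sup>2) / (1 + d * s)"
  unfolding tanh_add_def by (simp add: field_simps power2_eq_square)

lemma one_minus_tanh_add_squared: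
  assumes "1 + d * s \<noteq> 0"
  shows "1 - (tanh_add d s)\<^sup>2 = (1 - d\<^sup>2) * (1 - s\<^sup>2) / (1 + d * s)\<^sup>2"
proof -
  have "(1 + d * s)\<^sup>2 - (s + d)\<^sup>2 = (1 - d\<^sup>2) * (1 - s\<^sup>2)" by (simp add: power2_eq_square algebra_simps)
  then show ?thesis unfolding tanh_add_def using assms by (simp add: field_simps)
qed

lemma tanh_add_strict_mono:
  assumes d: "\<bar>d\<bar> < 1" and st: "-1 \<le> s" "s < t" "t \<le> 1"
  shows "tanh_add d s < tanh_add d t"
proof -
  have p: "0 < 1 + d * s" "0 < 1 + d * t" using one_plus_mult_pos d st by auto
  have "tanh_add d t - tanh_add d s = (1 - d\<^sup>2) * (t - s) / ((1 + d * s) * (1 + d * t))"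
    unfolding tanh_add_def using p by (simp add: field_simps power2_eq_square)
  moreover have "0 < (1 - d\<^sup>2) * (t - s) / ((1 + d * s) * (1 + d * t))"
    using d p st by (simp add: abs_square_less_1)
  ultimately show ?thesis by linarith
qed

lemma tanh_add_bounds:
  assumes d: "0 < d" "d < 1" and s: "-1 < s" "s < 1"
  shows "s < tanh_add d s" "tanh_add d s < 1"
proof -
  have p: "0 < 1 + d * s" using one_plus_mult_pos[of d s] d s by simp
  have "tanh_add d s - s = d * (1 - s\<^sup>2) / (1 + d * s)"
    and "1 - tanh_add d s = (1 - d) * (1 - s) / (1 + d * s)"
    unfolding tanh_add_def using p by (simp_all add: field_simps power2_eq_square)
  moreover have "0 < d * (1 - s\<^sup>2) / (1 + d * s)"
    using d s p by (simp add: abs_square_less_1)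
  moreover have "0 < (1 - d) * (1 - s) / (1 + d * s)" using d s p by simp
  ultimately show "s < tanh_add d s" "tanh_add d s < 1" by linarith+
qed

lemma tanh_add_jacobian:
  assumes "1 + d * s \<noteq> 0" "1 - s\<^sup>2 \<noteq> 0"
  shows "(1 - d * tanh_add d s) * ((1 - d\<^sup>2) / (1 + d * s)\<^sup>2)
       = (1 + d * s) * (1 - (tanh_add d s)\<^sup>2)\<^sup>2 / (1 - s\<^sup>2)\<^sup>2"
proof -
  have "P \<noteq> 0 \<Longrightarrow> A / P * (A / P\<^sup>2) = A\<^sup>2 / P ^ 3"
    and "P \<noteq> 0 \<Longrightarrow> B \<noteq> 0 \<Longrightarrow> P * (A * B / P\<^sup>2)\<^sup>2 / B\<^sup>2 = A\<^sup>2 / P ^ 3" for A B P :: real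
    by (simp_all add: field_simps power2_eq_square power3_eq_cube)
  then show ?thesis
    unfolding one_minus_mult_tanh_add[OF assms(1)] one_minus_tanh_add_squared[OF assms(1)]
    using assms by simp
qed

section \<open>Monotonicity of the leakage kernel\<close>

text \<open>alpha W d x / 2 and beta W d x / 2 are the contributions of the two posterior terms of
  leak_kernel to its derivative, written in terms of the posterior bias x.\<close>
definition alpha :: "real \<Rightarrow> real \<Rightarrow> real \<Rightarrow> real" where
  "alpha W d x = (1 + d * x) * bias_mim' W x - d * bias_mim W x"

definition beta :: "real \<Rightarrow> real \<Rightarrow> real \<Rightarrow> real" where
  "beta W d x = (1 - d * x) * bias_mim' W x + d * bias_mim W x"

definition slope_gap :: "real \<Rightarrow> real \<Rightarrow> real \<Rightarrow> real" where
  "slope_gap W d s = beta W d (tanh_add d s) - alpha W d s"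

lemma alpha_minus: "alpha W d (- x) = - beta W d x"
  unfolding alpha_def beta_def by (simp add: bias_mim_minus bias_mim'_minus algebra_simps)

lemma has_real_derivative_alpha:
  "(alpha W d has_real_derivative - (W / 2) * (1 + d * x) * bias_mim_curv W x) (at x)"
  unfolding alpha_def
  by (rule derivative_eq_intros has_real_derivative_bias_mim has_real_derivative_bias_mim' refl
      | simp add: field_simps)+

lemma has_real_derivative_beta:
  "(beta W d has_real_derivative - (W / 2) * (1 - d * x) * bias_mim_curv W x) (at x)"
  unfolding beta_def
  by (rule derivative_eq_intros has_real_derivative_bias_mim has_real_derivative_bias_mim' refl
      | simp add: field_simps)+

lemma has_real_derivative_slope_gap:
  assumes "1 + d * s \<noteq> 0"
  shows "(slope_gap W d has_real_derivative
     - (W / 2) * (1 - d * tanh_add d s) * bias_mim_curv W (tanh_add d s) * ((1 - d\<^sup>2) / (1 + d * s)\<^sup>2)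
     + (W / 2) * (1 + d * s) * bias_mim_curv W s) (at s)"
proof -
  have "((\<lambda>s. beta W d (tanh_add d s)) has_real_derivative
     - (W / 2) * (1 - d * tanh_add d s) * bias_mim_curv W (tanh_add d s) * ((1 - d\<^sup>2) / (1 + d * s)\<^sup>2)) (at s)"
    by (rule DERIV_chain2[OF has_real_derivative_beta has_real_derivative_tanh_add[OF assms]])
  from DERIV_diff[OF this has_real_derivative_alpha] show ?thesis
    unfolding slope_gap_def by (simp add: algebra_simps)
qed

text \<open>By tanh_add_jacobian the derivative equals (W/2) (1 + d s) / (1 - s^2)^2 times
  the decrease of weighted_curv from s to tanh_add d s.\<close>
lemma slope_gap_deriv_pos:
  assumes W: "0 < W" "W < 1" and d: "0 < d" "d < 1" and s: "-1 < s" "s < 1"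
    and right: "- s < tanh_add d s"
  shows "- (W / 2) * (1 - d * tanh_add d s) * bias_mim_curv W (tanh_add d s) * ((1 - d\<^sup>2) / (1 + d * s)\<^sup>2)
     + (W / 2) * (1 + d * s) * bias_mim_curv W s > 0"
proof -
  define t where "t = tanh_add d s"
  define J where "J = (1 - d\<^sup>2) / (1 + d * s)\<^sup>2"
  have p: "0 < 1 + d * s" using one_plus_mult_pos[of d s] d s by simp
  have ss: "0 < 1 - s\<^sup>2" using s by (simp add: abs_square_less_1)
  have "\<bar>s\<bar> < t" "t < 1" using tanh_add_bounds[OF d s] right unfolding t_def by auto
  then have "weighted_curv W t < weighted_curv W s"
    using weighted_curv_strict_antimono[OF W, of "\<bar>s\<bar>" t] weighted_curv_minus[of W s]
    by (cases "0 \<le> s") auto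
  then have "(1 + d * s) * weighted_curv W t / (1 - s\<^sup>2)\<^sup>2 < (1 + d * s) * weighted_curv W s / (1 - s\<^sup>2)\<^sup>2"
    using p ss by (intro divide_strict_right_mono mult_strict_left_mono) auto
  moreover have "(1 - d * t) * bias_mim_curv W t * J = ((1 - d * t) * J) * bias_mim_curv W t"
    by (simp only: mult_ac)
  moreover have "(1 - d * t) * J = (1 + d * s) * (1 - t\<^sup>2)\<^sup>2 / (1 - s\<^sup>2)\<^sup>2"
    using tanh_add_jacobian[of d s] p ss unfolding t_def J_def by simp
  moreover have "(1 + d * s) * bias_mim_curv W s = (1 + d * s) * weighted_curv W s / (1 - s\<^sup>2)\<^sup>2"
    using ss unfolding weighted_curv_def by simp
  ultimately have "(1 - d * t) * bias_mim_curv W t * J < (1 + d * s) * bias_mim_curv W s"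
    unfolding weighted_curv_def by simp
  then have "W / 2 * ((1 - d * t) * bias_mim_curv W t * J) < W / 2 * ((1 + d * s) * bias_mim_curv W s)"
    using W by (intro mult_strict_left_mono) auto
  then show ?thesis unfolding t_def[symmetric] J_def[symmetric] by (simp add: algebra_simps)
qed

lemma slope_gap_minus_tanh_add:
  assumes "1 + d * s \<noteq> 0" "d * d \<noteq> 1"
  shows "slope_gap W d (- tanh_add d s) = slope_gap W d s"
proof -
  have "tanh_add d (- tanh_add d s) = - s"
    using tanh_add_inverse[of d "- s"] assms by (simp add: tanh_add_minus[symmetric])
  then show ?thesis
    unfolding slope_gap_def using alpha_minus[of W d "tanh_add d s"] alpha_minus[of W d "- s"] by simp
qed

lemma slope_gap_strict_mono:
  assumes W: "0 < W" "W < 1" and d: "0 < d" "d < 1"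
    and ab: "-1 < a" "a < b" "b < 1" and right: "- a \<le> tanh_add d a"
  shows "slope_gap W d a < slope_gap W d b"
proof (rule DERIV_pos_imp_increasing_open[OF ab(2)])
  fix x assume x: "a < x" "x < b"
  then have xs: "-1 < x" "x < 1" using ab by auto
  have "tanh_add d a < tanh_add d x" using tanh_add_strict_mono[of d a x] d ab x by simp
  then have "- x < tanh_add d x" using right x by linarith
  moreover have "1 + d * x \<noteq> 0" using one_plus_mult_pos[of d x] d xs by simp
  ultimately show "\<exists>y. (slope_gap W d has_real_derivative y) (at x) \<and> y > 0"
    using has_real_derivative_slope_gap slope_gap_deriv_pos[OF W d xs] by blast
next
  have "isCont (slope_gap W d) x" if "x \<in> {a..b}" for x
  proof -
    have "-1 \<le> x" "x \<le> 1" using that ab by auto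
    then show ?thesis
      using d one_plus_mult_pos[of d x] by (intro DERIV_isCont[OF has_real_derivative_slope_gap]) auto
  qed
  then show "continuous_on {a..b} (slope_gap W d)" by (simp add: continuous_at_imp_continuous_on)
qed

text \<open>If -m1 \<le> m, where m = tanh_add d m1, monotonicity applies on [m1, m] directly;
  otherwise it applies on [-m, m], and -m has the same slope gap as m1 by
  slope_gap_minus_tanh_add.\<close>
lemma slope_gap_tanh_add_neg_less:
  assumes W: "0 < W" "W < 1" and d: "0 < d" "d < 1" and m: "0 < m" "m < 1"
  shows "slope_gap W d (tanh_add (- d) m) < slope_gap W d m"
proof -
  define m1 where "m1 = tanh_add (- d) m"
  have "-1 < - m" "- m < 1" using m by auto
  then have "-1 < m1" "m1 < m"
    using tanh_add_bounds[of d "- m"] d unfolding m1_def tanh_add_minus[of "- d" m, simplified] by auto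
  then have "m1 < 1" using m by simp
  have dd: "d * d \<noteq> 1" using d mult_strict_mono[of d 1 d 1] by auto
  have "1 - d * m \<noteq> 0" using one_plus_mult_pos[of "- d" m] d m by simp
  then have m_eq: "tanh_add d m1 = m" unfolding m1_def using tanh_add_inverse dd by blast
  show ?thesis
  proof (cases "- m1 \<le> m")
    case True
    then show ?thesis
      using slope_gap_strict_mono[OF W d \<open>-1 < m1\<close> \<open>m1 < m\<close>] m_eq m unfolding m1_def[symmetric] by simp
  next
    case False
    then have "slope_gap W d (- m) < slope_gap W d m"
      using slope_gap_strict_mono[OF W d \<open>-1 < - m\<close>, of m] m_eq m
        tanh_add_minus[of "- d" m, simplified] unfolding m1_def by simp
    moreover have "1 + d * m1 \<noteq> 0" using one_plus_mult_pos[of d m1] d \<open>-1 < m1\<close> \<open>m1 < 1\<close> by simp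
    then have "slope_gap W d (- m) = slope_gap W d m1"
      using slope_gap_minus_tanh_add[of d m1 W] dd m_eq by simp
    ultimately show ?thesis unfolding m1_def by simp
  qed
qed

definition leak_kernel :: "real \<Rightarrow> real \<Rightarrow> real \<Rightarrow> real" where
  "leak_kernel W d m = bias_mim W m
     - (1 - d * m) / 2 * bias_mim W (tanh_add (- d) m) - (1 + d * m) / 2 * bias_mim W (tanh_add d m)"

lemma leak_kernel_minus: "leak_kernel W (- d) m = leak_kernel W d m"
  unfolding leak_kernel_def by (simp add: algebra_simps)

lemma leak_kernel_one:
  assumes "-1 \<le> m" "m \<le> 1"
  shows "leak_kernel W 1 m = bias_mim W m - exp (- W)"
proof -
  have "bias_mim W 1 = exp (- W)" "bias_mim W (- 1) = exp (- W)"
    unfolding bias_mim_def by simp_all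
  moreover have "tanh_add (- 1) m = - 1" if "m \<noteq> 1"
    using that unfolding tanh_add_def by (simp add: divide_eq_minus_1_iff)
  moreover have "tanh_add 1 m = 1" if "m \<noteq> - 1"
    using that unfolding tanh_add_def by (simp add: add.commute add_eq_0_iff)
  ultimately have "(1 - m) / 2 * bias_mim W (tanh_add (- 1) m) = (1 - m) / 2 * exp (- W)"
    and "(1 + m) / 2 * bias_mim W (tanh_add 1 m) = (1 + m) / 2 * exp (- W)"
    by (cases "m = 1"; cases "m = - 1"; simp)+
  then show ?thesis unfolding leak_kernel_def by (simp add: field_simps)
qed

lemma has_real_derivative_leak_kernel:
  assumes p: "1 + d * m \<noteq> 0" and q: "1 - d * m \<noteq> 0" and dd: "d * d \<noteq> 1"
  shows "(leak_kernel W d has_real_derivative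
     (slope_gap W d (tanh_add (- d) m) - slope_gap W d m) / 2) (at m)"
proof -
  have q': "1 + (- d) * m \<noteq> 0" using q by simp
  note chain = DERIV_chain2[OF has_real_derivative_bias_mim has_real_derivative_tanh_add]
  have D: "(leak_kernel W d has_real_derivative
     bias_mim' W m - ((- d) / 2 * bias_mim W (tanh_add (- d) m)
        + ((1 - d * m) / 2 * ((1 - (- d)\<^sup>2) / (1 + (- d) * m)\<^sup>2)) * bias_mim' W (tanh_add (- d) m))
       - (d / 2 * bias_mim W (tanh_add d m)
        + ((1 + d * m) / 2 * ((1 - d\<^sup>2) / (1 + d * m)\<^sup>2)) * bias_mim' W (tanh_add d m))) (at m)"
    (is "(_ has_real_derivative ?D) _")
    unfolding leak_kernel_def
    by (rule derivative_eq_intros has_real_derivative_bias_mim chain[OF q'] chain[OF p] refl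
        | simp add: mult_ac)+
  have "P \<noteq> 0 \<Longrightarrow> P / 2 * (A / P\<^sup>2) = (A / P) / 2" for P A :: real
    by (simp add: field_simps power2_eq_square)
  then have e: "(1 - d * m) / 2 * ((1 - (- d)\<^sup>2) / (1 + (- d) * m)\<^sup>2) = (1 + d * tanh_add (- d) m) / 2"
    "(1 + d * m) / 2 * ((1 - d\<^sup>2) / (1 + d * m)\<^sup>2) = (1 - d * tanh_add d m) / 2"
    using one_minus_mult_tanh_add[OF p] one_minus_mult_tanh_add[OF q'] p q by simp_all
  have "?D = (alpha W d m + beta W d m - alpha W d (tanh_add (- d) m) - beta W d (tanh_add d m)) / 2"
    unfolding e alpha_def beta_def by (simp add: field_simps)
  also have "\<dots> = (slope_gap W d (tanh_add (- d) m) - slope_gap W d m) / 2"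
    unfolding slope_gap_def using tanh_add_inverse q dd by simp
  finally show ?thesis using D by (rule DERIV_cong[rotated])
qed

lemma leak_kernel_abs: "leak_kernel W \<bar>d\<bar> m = leak_kernel W d m"
  by (cases "0 \<le> d") (simp_all add: leak_kernel_minus)

lemma continuous_on_leak_kernel:
  assumes "\<bar>d\<bar> \<le> 1"
  shows "continuous_on {-1..1} (leak_kernel W d)"
proof (cases "\<bar>d\<bar> = 1")
  case True
  then have "leak_kernel W d m = bias_mim W m - exp (- W)" if "m \<in> {-1..1}" for m
    using that leak_kernel_one[of m W] leak_kernel_abs[of W d] by auto
  moreover have "continuous_on {-1..1} (\<lambda>m. bias_mim W m - exp (- W))"
    by (intro continuous_intros continuous_on_bias_mim)
  ultimately show ?thesis using continuous_on_cong[OF refl, of "{-1..1}" "leak_kernel W d"] by simp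
next
  case False
  then have d: "\<bar>d\<bar> < 1" "d * d \<noteq> 1"
    using assms abs_square_less_1[of d] by (auto simp: power2_eq_square)
  have "isCont (leak_kernel W d) m" if "m \<in> {-1..1}" for m
    using that d one_plus_mult_pos[of d m] one_plus_mult_pos[of "- d" m]
    by (intro DERIV_isCont[OF has_real_derivative_leak_kernel]) auto
  then show ?thesis by (simp add: continuous_at_imp_continuous_on)
qed

lemma leak_kernel_strict_antimono:
  assumes W: "0 < W" "W < 1" and d: "d \<noteq> 0" "\<bar>d\<bar> \<le> 1" and xy: "0 \<le> x" "x < y" "y \<le> 1"
  shows "leak_kernel W d y < leak_kernel W d x"
proof (cases "\<bar>d\<bar> = 1")
  case True
  have "leak_kernel W d z = bias_mim W z - exp (- W)" if "z \<in> {x, y}" for z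
    using that xy leak_kernel_one[of z W] leak_kernel_abs[of W d] True by auto
  then show ?thesis using bias_mim_strict_antimono[of W x y] W xy by simp
next
  case False
  define e where "e = \<bar>d\<bar>"
  have e: "0 < e" "e < 1" "e * e \<noteq> 1"
    using d False abs_square_less_1[of d] unfolding e_def by (auto simp: power2_eq_square)
  have "leak_kernel W e y < leak_kernel W e x"
  proof (rule DERIV_neg_imp_decreasing_open[OF xy(2)])
    fix z assume "x < z" "z < y"
    then have z: "0 < z" "z < 1" using xy by auto
    have "1 + e * z \<noteq> 0" "1 - e * z \<noteq> 0" using one_plus_mult_pos[of e z] one_plus_mult_pos[of "- e" z] e z by auto
    then show "\<exists>D. (leak_kernel W e has_real_derivative D) (at z) \<and> D < 0"
      using has_real_derivative_leak_kernel[of e z W] slope_gap_tanh_add_neg_less[OF W e(1,2) z] e by force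
  next
    show "continuous_on {x..y} (leak_kernel W e)"
      using continuous_on_leak_kernel[of e W] e xy by (rule_tac continuous_on_subset) auto
  qed
  then show ?thesis unfolding e_def leak_kernel_abs .
qed

section \<open>Leakage of the binary symmetric channel\<close>

lemma CMIM_eq_double_sum:
  assumes "finite A" "finite B" "\<And>i j. 0 \<le> px i * W i j"
  shows "CMIM w A B px W
       = (\<Sum>j\<in>B. \<Sum>i\<in>A. px i * W i j * exp (w * (1 - px i * W i j / out_prob A px W j)))"
proof -
  have "out_prob A px W j * (\<Sum>i\<in>A. px i * W i j / out_prob A px W j
          * exp (w * (1 - px i * W i j / out_prob A px W j)))
      = (\<Sum>i\<in>A. px i * W i j * exp (w * (1 - px i * W i j / out_prob A px W j)))"
    if "out_prob A px W j > 0" for j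
    using that by (simp add: sum_distrib_left)
  moreover have "(\<Sum>i\<in>A. px i * W i j * exp (w * (1 - px i * W i j / out_prob A px W j))) = 0"
    if "\<not> out_prob A px W j > 0" for j
  proof -
    have "out_prob A px W j = 0"
      using that assms(3) unfolding out_prob_def by (meson sum_nonneg order.antisym not_less)
    then have "\<forall>i\<in>A. px i * W i j = 0"
      using assms unfolding out_prob_def by (subst (asm) sum_nonneg_eq_0_iff) auto
    then show ?thesis by (simp add: sum.neutral)
  qed
  ultimately show ?thesis
    unfolding CMIM_def sum.inter_filter[OF assms(2)] by (intro sum.cong) auto
qed

lemma bias_mim_two_point:
  assumes "0 \<le> x" "0 \<le> y"
  shows "exp W * ((x + y) * bias_mim W ((y - x) / (x + y)))
       = x * exp (2 * W * (1 - x / (x + y))) + y * exp (2 * W * (1 - y / (x + y)))"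
proof (cases "x + y = 0")
  case True
  then have "x = 0" "y = 0" using assms by auto
  then show ?thesis by simp
next
  case False
  define q where "q = x + y"
  have "exp W * exp (W * ((y - x) / q)) = exp (2 * W * (1 - x / q))"
    and "exp W * exp (- (W * ((y - x) / q))) = exp (2 * W * (1 - y / q))"
    unfolding exp_add[symmetric] using False unfolding q_def by (simp_all add: field_simps)
  moreover have "q / 2 * (1 - (y - x) / q) = x" "q / 2 * (1 + (y - x) / q) = y"
    using False unfolding q_def by (simp_all add: field_simps)
  moreover have "exp W * (q * bias_mim W ((y - x) / q))
      = (q / 2 * (1 - (y - x) / q)) * (exp W * exp (W * ((y - x) / q)))
        + (q / 2 * (1 + (y - x) / q)) * (exp W * exp (- (W * ((y - x) / q))))"
    unfolding bias_mim_def by (simp add: algebra_simps add_divide_distrib diff_divide_distrib)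
  ultimately show ?thesis unfolding q_def by simp
qed

lemma leak_explicit:
  assumes "0 \<le> p" "p \<le> 1" "0 \<le> b" "b \<le> 1"
  shows "leak w b p = p * exp (w * (1 - p)) + (1 - p) * exp (w * (1 - (1 - p)))
     - (p * (1 - b) * exp (w * (1 - p * (1 - b) / (p * (1 - b) + (1 - p) * b)))
        + (1 - p) * b * exp (w * (1 - (1 - p) * b / (p * (1 - b) + (1 - p) * b)))
        + p * b * exp (w * (1 - p * b / (p * b + (1 - p) * (1 - b))))
        + (1 - p) * (1 - b) * exp (w * (1 - (1 - p) * (1 - b) / (p * b + (1 - p) * (1 - b)))))"
proof -
  have nonneg: "0 \<le> bin_input p i * bsc b i j" for i j
    unfolding bin_input_def bsc_def using assms by auto
  show ?thesis
    unfolding leak_def CMIM_eq_double_sum[OF finite finite nonneg]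
    unfolding MIM_def out_prob_def bin_input_def bsc_def UNIV_bool
    by (simp add: algebra_simps)
qed

lemma leak_eq_leak_kernel:
  assumes p: "0 \<le> p" "p \<le> 1" and b: "0 \<le> b" "b \<le> 1"
  shows "leak w b p = exp (w / 2) * leak_kernel (w / 2) (1 - 2 * b) (1 - 2 * p)"
proof -
  define q1 where "q1 = p * (1 - b) + (1 - p) * b"
  define q2 where "q2 = p * b + (1 - p) * (1 - b)"
  have cancel: "a' = 2 * a \<Longrightarrow> c' = 2 * c \<Longrightarrow> a' / c' = a / c" for a a' c c' :: real
    by simp
  have t: "tanh_add (- (1 - 2 * b)) (1 - 2 * p) = ((1 - p) * b - p * (1 - b)) / q1"
    "tanh_add (1 - 2 * b) (1 - 2 * p) = ((1 - p) * (1 - b) - p * b) / q2"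
    unfolding tanh_add_def q1_def q2_def by (rule cancel; simp add: algebra_simps)+
  have c: "(1 - (1 - 2 * b) * (1 - 2 * p)) / 2 = q1" "(1 + (1 - 2 * b) * (1 - 2 * p)) / 2 = q2"
    unfolding q1_def q2_def by (simp_all add: field_simps)
  have "exp (w / 2) * leak_kernel (w / 2) (1 - 2 * b) (1 - 2 * p)
      = exp (w / 2) * bias_mim (w / 2) (1 - 2 * p)
      - exp (w / 2) * (q1 * bias_mim (w / 2) (((1 - p) * b - p * (1 - b)) / q1))
      - exp (w / 2) * (q2 * bias_mim (w / 2) (((1 - p) * (1 - b) - p * b) / q2))"
    unfolding leak_kernel_def t c by (simp add: algebra_simps)
  also have "\<dots> = leak w b p"
    using bias_mim_two_point[of p "1 - p" "w / 2"] bias_mim_two_point[of "p * (1 - b)" "(1 - p) * b" "w / 2"]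
      bias_mim_two_point[of "p * b" "(1 - p) * (1 - b)" "w / 2"] p b
    unfolding leak_explicit[OF p b] q1_def q2_def by simp
  finally show ?thesis ..
qed

lemma leak_zero:
  assumes "0 \<le> b" "b \<le> 1"
  shows "leak w b 0 = 0"
  unfolding leak_explicit[OF order_refl zero_le_one assms]
  using assms by (cases "b = 0"; cases "b = 1") auto

lemma leak_half:
  assumes "0 \<le> b" "b \<le> 1"
  shows "leak w b (1 / 2) = exp (w / 2) - (b * exp (w * (1 - b)) + (1 - b) * exp (w * b))"
proof -
  have "1 / 2 * (1 - b) + (1 - 1 / 2) * b = (1 / 2 :: real)" "1 / 2 * b + (1 - 1 / 2) * (1 - b) = (1 / 2 :: real)"
    by (simp_all add: field_simps)
  then show ?thesis unfolding leak_explicit[of "1 / 2", OF _ _ assms, simplified]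
    by (simp add: field_simps)
qed

lemma leak_strict_mono:
  assumes w: "0 < w" "w < 2" and b: "0 \<le> b" "b \<le> 1" "b \<noteq> 1 / 2"
    and p: "0 \<le> p" "p < p'" "p' \<le> 1 / 2"
  shows "leak w b p < leak w b p'"
proof -
  have "leak_kernel (w / 2) (1 - 2 * b) (1 - 2 * p) < leak_kernel (w / 2) (1 - 2 * b) (1 - 2 * p')"
    using leak_kernel_strict_antimono[of "w / 2" "1 - 2 * b" "1 - 2 * p'" "1 - 2 * p"] w b p by auto
  then show ?thesis using leak_eq_leak_kernel[of p b w] leak_eq_leak_kernel[of p' b w] b p by simp
qed

lemma continuous_on_leak:
  assumes "0 \<le> b" "b \<le> 1"
  shows "continuous_on {0..1 / 2} (leak w b)"
proof -
  have "(\<lambda>p. 1 - 2 * p) ` {0..1 / 2} \<subseteq> {-1..1 :: real}" by auto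
  then have "continuous_on {0..1 / 2} (\<lambda>p. exp (w / 2) * leak_kernel (w / 2) (1 - 2 * b) (1 - 2 * p))"
    using assms by (intro continuous_intros continuous_on_compose2[OF continuous_on_leak_kernel]) auto
  moreover have "leak w b p = exp (w / 2) * leak_kernel (w / 2) (1 - 2 * b) (1 - 2 * p)"
    if "p \<in> {0..1 / 2}" for p
    using that assms by (intro leak_eq_leak_kernel) auto
  ultimately show ?thesis using continuous_on_cong[OF refl, of "{0..1 / 2}" "leak w b"] by simp
qed

section \<open>Mutual information and the optimal value\<close>

lemma mult_log_divide:
  assumes "c \<noteq> 0 \<Longrightarrow> 0 < y \<and> 0 < z"
  shows "c * log a (y / z) = c * log a y - c * log a z"
  using assms by (cases "c = 0") (simp_all add: log_divide right_diff_distrib)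

lemma bsc_MI_eq:
  assumes p: "0 \<le> p" "p \<le> 1" and b: "0 \<le> b" "b \<le> 1"
  shows "bsc_MI b p = bin_entropy (p * (1 - b) + (1 - p) * b) - bin_entropy b"
proof -
  define q1 where "q1 = p * (1 - b) + (1 - p) * b"
  define q2 where "q2 = p * b + (1 - p) * (1 - b)"
  have nonneg: "0 \<le> p * (1 - b)" "0 \<le> (1 - p) * b" "0 \<le> p * b" "0 \<le> (1 - p) * (1 - b)"
    using p b by auto
  have "bsc_MI b p = p * (1 - b) * log 2 ((1 - b) / q1) + p * b * log 2 (b / q2)
      + (1 - p) * b * log 2 (b / q1) + (1 - p) * (1 - b) * log 2 ((1 - b) / q2)"
    unfolding bsc_MI_def mutual_info_def out_prob_def bin_input_def bsc_def UNIV_bool q1_def q2_def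
    by (simp add: algebra_simps)
  also have "\<dots> = p * (1 - b) * log 2 (1 - b) - p * (1 - b) * log 2 q1
      + (p * b * log 2 b - p * b * log 2 q2) + ((1 - p) * b * log 2 b - (1 - p) * b * log 2 q1)
      + ((1 - p) * (1 - b) * log 2 (1 - b) - (1 - p) * (1 - b) * log 2 q2)"
  proof -
    have pos: "x \<noteq> 0 \<Longrightarrow> 0 \<le> x \<Longrightarrow> 0 \<le> y \<Longrightarrow> 0 < x + y \<and> 0 < y + x" for x y :: real
      by auto
    have "p * (1 - b) \<noteq> 0 \<Longrightarrow> 0 < 1 - b" "p * b \<noteq> 0 \<Longrightarrow> 0 < b"
      "(1 - p) * b \<noteq> 0 \<Longrightarrow> 0 < b" "(1 - p) * (1 - b) \<noteq> 0 \<Longrightarrow> 0 < 1 - b"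
      using b by auto
    then show ?thesis
      using pos nonneg mult_log_divide[of "p * (1 - b)" "1 - b" q1 2] mult_log_divide[of "p * b" b q2 2]
        mult_log_divide[of "(1 - p) * b" b q1 2] mult_log_divide[of "(1 - p) * (1 - b)" "1 - b" q2 2]
      unfolding q1_def q2_def by presburger
  qed
  also have "\<dots> = (1 - b) * log 2 (1 - b) + b * log 2 b - q1 * log 2 q1 - q2 * log 2 q2"
  proof -
    have "p * (1 - b) * log 2 (1 - b) - p * (1 - b) * L1 + (p * b * log 2 b - p * b * L2)
        + ((1 - p) * b * log 2 b - (1 - p) * b * L1) + ((1 - p) * (1 - b) * log 2 (1 - b) - (1 - p) * (1 - b) * L2)
        = (1 - b) * log 2 (1 - b) + b * log 2 b - q1 * L1 - q2 * L2" for L1 L2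
      unfolding q1_def q2_def by (simp add: algebra_simps)
    then show ?thesis .
  qed
  also have "\<dots> = bin_entropy q1 - bin_entropy b"
  proof -
    have "1 - q1 = q2" unfolding q1_def q2_def by (simp add: algebra_simps)
    then show ?thesis unfolding bin_entropy_def \<open>1 - q1 = q2\<close> by (simp add: algebra_simps)
  qed
  finally show ?thesis unfolding q1_def .
qed

lemma bin_entropy_one_minus: "bin_entropy (1 - x) = bin_entropy x"
  unfolding bin_entropy_def by (simp add: algebra_simps)

lemma bin_entropy_half: "bin_entropy (1 / 2) = 1"
  unfolding bin_entropy_def by (simp add: log_divide)

lemma bsc_MI_half:
  assumes "0 \<le> b" "b \<le> 1"
  shows "bsc_MI b (1 / 2) = 1 - bin_entropy b"
  using bsc_MI_eq[of "1 / 2" b] assms by (simp add: field_simps bin_entropy_half)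

lemma bin_entropy_nonneg:
  assumes "0 \<le> x" "x \<le> 1"
  shows "0 \<le> bin_entropy x"
proof -
  have "x * log 2 x \<le> 0"
    using assms by (cases "x = 0") (auto intro!: mult_nonneg_nonpos simp: log_le_zero_cancel_iff)
  moreover have "(1 - x) * log 2 (1 - x) \<le> 0"
    using assms by (cases "x = 1") (auto intro!: mult_nonneg_nonpos simp: log_le_zero_cancel_iff)
  ultimately show ?thesis unfolding bin_entropy_def by simp
qed

lemma has_real_derivative_bin_entropy:
  assumes "0 < x" "x < 1"
  shows "(bin_entropy has_real_derivative log 2 (1 - x) - log 2 x) (at x)"
proof -
  have "bin_entropy = (\<lambda>x. - (x * ln x) / ln 2 - ((1 - x) * ln (1 - x)) / ln 2)"
    unfolding bin_entropy_def log_def by (rule ext) simp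
  moreover have "((\<lambda>x. - (x * ln x) / ln 2 - ((1 - x) * ln (1 - x)) / ln 2) has_real_derivative
        (- (ln x + 1)) / ln 2 - (- ln (1 - x) - 1) / ln 2) (at x)"
    using assms by (intro DERIV_diff DERIV_cdivide DERIV_minus) (auto intro!: derivative_eq_intros)
  moreover have "(- (ln x + 1)) / ln 2 - (- ln (1 - x) - 1) / ln 2 = log 2 (1 - x) - log 2 x"
    unfolding log_def by (simp add: field_simps)
  ultimately show ?thesis by simp
qed

lemma bin_entropy_mono:
  assumes "0 \<le> x" "x \<le> y" "y \<le> 1 / 2"
  shows "bin_entropy x \<le> bin_entropy y"
proof (cases "x = 0")
  case True
  then show ?thesis using bin_entropy_nonneg[of y] assms by (simp add: bin_entropy_def)
next
  case False
  show ?thesis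
  proof (rule DERIV_nonneg_imp_nondecreasing[OF assms(2)])
    fix z assume "x \<le> z" "z \<le> y"
    then have "0 < z" "z < 1" "log 2 z \<le> log 2 (1 - z)" using False assms by auto
    then show "\<exists>D. (bin_entropy has_real_derivative D) (at z) \<and> 0 \<le> D"
      using has_real_derivative_bin_entropy by force
  qed
qed

text \<open>The output bias b + p (1 - 2b) moves monotonically from b towards 1/2 as p runs over [0, 1/2].\<close>
lemma bsc_MI_mono:
  assumes b: "0 \<le> b" "b \<le> 1" and p: "0 \<le> p" "p \<le> p'" "p' \<le> 1 / 2"
  shows "bsc_MI b p \<le> bsc_MI b p'"
proof -
  have "bin_entropy (b + p * (1 - 2 * b)) \<le> bin_entropy (b + p' * (1 - 2 * b))"
  proof (cases "b \<le> 1 / 2")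
    case True
    have "p * (1 - 2 * b) \<le> p' * (1 - 2 * b)" "p' * (1 - 2 * b) \<le> 1 / 2 * (1 - 2 * b)"
      using True p by (intro mult_right_mono; simp)+
    moreover have "0 \<le> p * (1 - 2 * b)" using True p by simp
    ultimately show ?thesis using b p True by (intro bin_entropy_mono) (auto simp: algebra_simps)
  next
    case False
    have "p * (2 * b - 1) \<le> p' * (2 * b - 1)" "p' * (2 * b - 1) \<le> 1 / 2 * (2 * b - 1)"
      using False p by (intro mult_right_mono; simp)+
    moreover have "0 \<le> p * (2 * b - 1)" using False p by simp
    ultimately have "bin_entropy (1 - (b + p * (1 - 2 * b))) \<le> bin_entropy (1 - (b + p' * (1 - 2 * b)))"
      using b p False by (intro bin_entropy_mono) (auto simp: algebra_simps)
    then show ?thesis by (simp add: bin_entropy_one_minus)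
  qed
  moreover have "q * (1 - b) + (1 - q) * b = b + q * (1 - 2 * b)" for q :: real
    by (simp add: algebra_simps)
  ultimately show ?thesis using bsc_MI_eq[of p b] bsc_MI_eq[of p' b] b p by simp
qed

lemma is_opt_value_largest_feasible:
  assumes b: "0 \<le> b" "b \<le> 1" and p0: "p0 \<in> {0..1 / 2}" "leak w b p0 \<le> eps"
    and largest: "\<And>p. p \<in> {0..1 / 2} \<Longrightarrow> leak w b p \<le> eps \<Longrightarrow> p \<le> p0"
  shows "is_opt_value w b eps (bsc_MI b p0)"
  unfolding is_opt_value_def using p0 largest bsc_MI_mono[OF b] by auto

lemma is_opt_value_leak_root:
  assumes w: "0 < w" "w < 2" and b: "0 \<le> b" "b \<le> 1" "b \<noteq> 1 / 2"
    and ps: "ps \<in> {0..1 / 2}" "leak w b ps = eps"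
  shows "is_opt_value w b eps (bsc_MI b ps)"
proof (rule is_opt_value_largest_feasible[OF b(1,2) ps(1)])
  show "leak w b ps \<le> eps" using ps by simp
  show "p \<le> ps" if "p \<in> {0..1 / 2}" "leak w b p \<le> eps" for p
    using that ps leak_strict_mono[OF w b, of ps p] by force
qed

theorem proposition5:
  fixes w b eps :: real
  assumes "0 < w" "w < 2" "0 \<le> b" "b \<le> 1" "0 < eps"
  defines "C \<equiv> exp (w / 2) - (b * exp (w * (1 - b)) + (1 - b) * exp (w * b))"
  shows "(eps \<ge> C \<longrightarrow> is_opt_value w b eps (1 - bin_entropy b))
       \<and> (eps \<le> C \<longrightarrow>
            (\<exists>ps\<in>{0..1/2}. leak w b ps = eps) \<and>
            (\<forall>ps\<in>{0..1/2}. leak w b ps = eps \<longrightarrow>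
               is_opt_value w b eps
                 (bin_entropy (ps * (1 - b) + (1 - ps) * b) - bin_entropy b)))"
proof -
  note w = assms(1,2) and b = assms(3,4)
  have leak_half_C: "leak w b (1 / 2) = C" unfolding C_def using leak_half[OF b] .
  show ?thesis
  proof (intro conjI impI)
    assume "C \<le> eps"
    then show "is_opt_value w b eps (1 - bin_entropy b)"
      using is_opt_value_largest_feasible[OF b, of "1 / 2"] leak_half_C bsc_MI_half[OF b] by auto
  next
    assume "eps \<le> C"
    show "\<exists>ps\<in>{0..1/2}. leak w b ps = eps"
      using IVT'[of "leak w b" 0 eps "1 / 2", OF _ _ _ continuous_on_leak[OF b]]
        leak_zero[OF b] leak_half_C \<open>0 < eps\<close> \<open>eps \<le> C\<close> by auto
    have "b \<noteq> 1 / 2"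
    proof
      assume "b = 1 / 2"
      have "C = 0" unfolding C_def \<open>b = 1 / 2\<close> by (simp add: field_simps)
      then show False using \<open>0 < eps\<close> \<open>eps \<le> C\<close> by simp
    qed
    then show "\<forall>ps\<in>{0..1/2}. leak w b ps = eps \<longrightarrow>
        is_opt_value w b eps (bin_entropy (ps * (1 - b) + (1 - ps) * b) - bin_entropy b)"
      using is_opt_value_leak_root[OF w b] bsc_MI_eq[of _ b] b by auto
  qed
qed

end
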